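(* Let $M$ be a matroid of rank $r$ on a finite set $E$, and let $\mathcal H$ be the set of hyperplanes of $M$. Suppose that for each $H\in\mathcal H$, $U_H$ is an $(r-1)$-free set with $\mathrm{cl}_{r-2}(U_H)=H$, and put \[ \mathcal U=\{U_H : H\in\mathcal H,\ |U_H|\ge r\}. \] Then $\mathcal U$ is the set of dependent hyperplanes of a paving matroid of rank $r$ on $E$.
   Context: A set $U\subseteq E$ is $k$-free (in $M$) if there is no circuit $C$ of $M$ with $|C|\le k$ and $C\subseteq U$. A set $X$ is $k$-closed in $M$ if $\mathrm{cl}_M(Y)\subseteq X$ for all $Y\subseteq X$ with $|Y|\le k$; $\mathrm{cl}_k(X)$ is the intersection of all $k$-closed sets containing $X$. A matroid of rank $r$ is paving if all its circuits have at least $r$ elements. *)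

theory Defs
  imports Main
begin

definition matroid :: "'a set \<Rightarrow> ('a set \<Rightarrow> bool) \<Rightarrow> bool" where
  "matroid E indep \<longleftrightarrow> finite E \<and> indep {} \<and>
     (\<forall>X. indep X \<longrightarrow> X \<subseteq> E) \<and>
     (\<forall>X Y. indep X \<and> Y \<subseteq> X \<longrightarrow> indep Y) \<and>
     (\<forall>X Y. indep X \<and> indep Y \<and> card X < card Y \<longrightarrow> (\<exists>e\<in>Y - X. indep (insert e X)))"

definition mrank :: "('a set \<Rightarrow> bool) \<Rightarrow> 'a set \<Rightarrow> nat" where
  "mrank indep X = Max {card I | I. I \<subseteq> X \<and> indep I}"

definition mcl :: "'a set \<Rightarrow> ('a set \<Rightarrow> bool) \<Rightarrow> 'a set \<Rightarrow> 'a set" where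
  "mcl E indep X = {e \<in> E. mrank indep (insert e X) = mrank indep X}"

definition circuit :: "'a set \<Rightarrow> ('a set \<Rightarrow> bool) \<Rightarrow> 'a set \<Rightarrow> bool" where
  "circuit E indep C \<longleftrightarrow> C \<subseteq> E \<and> \<not> indep C \<and> (\<forall>D. D \<subset> C \<longrightarrow> indep D)"

definition flat :: "'a set \<Rightarrow> ('a set \<Rightarrow> bool) \<Rightarrow> 'a set \<Rightarrow> bool" where
  "flat E indep X \<longleftrightarrow> X \<subseteq> E \<and> mcl E indep X = X"

definition hyperplane :: "'a set \<Rightarrow> ('a set \<Rightarrow> bool) \<Rightarrow> 'a set \<Rightarrow> bool" where
  "hyperplane E indep H \<longleftrightarrow> flat E indep H \<and> mrank indep H + 1 = mrank indep E"

text \<open>k-free and k-closed; k is an integer so that e.g. k = r - 2 with r = 1 means -1.\<close>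
definition k_free :: "'a set \<Rightarrow> ('a set \<Rightarrow> bool) \<Rightarrow> int \<Rightarrow> 'a set \<Rightarrow> bool" where
  "k_free E indep k U \<longleftrightarrow> \<not> (\<exists>C. circuit E indep C \<and> int (card C) \<le> k \<and> C \<subseteq> U)"

definition k_closed :: "'a set \<Rightarrow> ('a set \<Rightarrow> bool) \<Rightarrow> int \<Rightarrow> 'a set \<Rightarrow> bool" where
  "k_closed E indep k X \<longleftrightarrow> X \<subseteq> E \<and>
     (\<forall>Y. Y \<subseteq> X \<and> int (card Y) \<le> k \<longrightarrow> mcl E indep Y \<subseteq> X)"

definition cl_k :: "'a set \<Rightarrow> ('a set \<Rightarrow> bool) \<Rightarrow> int \<Rightarrow> 'a set \<Rightarrow> 'a set" where
  "cl_k E indep k X = \<Inter> {Z. k_closed E indep k Z \<and> X \<subseteq> Z}"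

definition paving :: "'a set \<Rightarrow> ('a set \<Rightarrow> bool) \<Rightarrow> bool" where
  "paving E indep \<longleftrightarrow> (\<forall>C. circuit E indep C \<longrightarrow> card C \<ge> mrank indep E)"

end

theory Submission
  imports Defs
begin

text \<open>
  The construction is the classical one for paving matroids: given a family \<open>\<U>\<close> of subsets of
  \<open>E\<close> of size at least \<open>r\<close>, no two of which share \<open>r - 1\<close> elements, declare a set independent
  if it has fewer than \<open>r\<close> elements, or exactly \<open>r\<close> elements and lies in no member of \<open>\<U>\<close>.
  Augmentation holds because an \<open>(r-1)\<close>-set lies in at most one member of \<open>\<U>\<close>, and the
  dependent hyperplanes of the resulting matroid are precisely the members of \<open>\<U>\<close>.

  For the sets \<open>U\<^sub>H\<close> both hypotheses on \<open>\<U>\<close> come from the original matroid. An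
  \<open>(r-1)\<close>-set \<open>Y \<subseteq> U\<^sub>H \<inter> U\<^sub>H\<^sub>'\<close> is independent because \<open>U\<^sub>H\<close> is \<open>(r-1)\<close>-free, so it spans
  each hyperplane containing it, and \<open>U\<^sub>H \<subseteq> cl\<^sub>r\<^sub>-\<^sub>2(U\<^sub>H) = H\<close> forces \<open>H = H'\<close>. A basis of
  the original matroid lies in no hyperplane, hence in no \<open>U\<^sub>H\<close>, which makes the rank \<open>r\<close>.
\<close>

section \<open>Matroid basics\<close>

context
  fixes E :: "'a set" and indep :: "'a set \<Rightarrow> bool"
  assumes matroid: "matroid E indep"
begin

lemma finite_ground: "finite E"
  using matroid unfolding matroid_def by blast

lemma indep_subset_ground: "indep X \<Longrightarrow> X \<subseteq> E"
  using matroid unfolding matroid_def by blast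

lemma indep_augment:
  "indep X \<Longrightarrow> indep Y \<Longrightarrow> card X < card Y \<Longrightarrow> \<exists>e\<in>Y - X. indep (insert e X)"
  using matroid unfolding matroid_def by blast

lemma finite_subset_ground: "X \<subseteq> E \<Longrightarrow> finite X"
  using finite_subset finite_ground by metis

lemma finite_indep: "indep X \<Longrightarrow> finite X"
  using finite_subset_ground indep_subset_ground by metis

lemma finite_indep_cards: "finite {card I | I. I \<subseteq> X \<and> indep I}"
proof -
  have "{card I | I. I \<subseteq> X \<and> indep I} \<subseteq> {..card E}"
    using indep_subset_ground finite_ground by (auto intro!: card_mono)
  then show ?thesis
    using finite_subset by blast
qed

lemma indep_cards_nonempty: "{card I | I. I \<subseteq> X \<and> indep I} \<noteq> {}"
  using matroid unfolding matroid_def by auto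

lemma card_le_mrank: "I \<subseteq> X \<Longrightarrow> indep I \<Longrightarrow> card I \<le> mrank indep X"
  unfolding mrank_def using finite_indep_cards by (rule Max_ge) blast

lemma mrank_le: "(\<And>I. I \<subseteq> X \<Longrightarrow> indep I \<Longrightarrow> card I \<le> k) \<Longrightarrow> mrank indep X \<le> k"
  unfolding mrank_def using finite_indep_cards indep_cards_nonempty by (subst Max_le_iff) blast+

lemma obtain_indep_card_mrank:
  obtains I where "I \<subseteq> X" "indep I" "card I = mrank indep X"
proof -
  have "mrank indep X \<in> {card I | I. I \<subseteq> X \<and> indep I}"
    unfolding mrank_def using finite_indep_cards indep_cards_nonempty by (rule Max_in)
  then obtain I where "mrank indep X = card I" "I \<subseteq> X" "indep I"
    by blast
  then show ?thesis using that by simp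
qed

lemma mrank_mono: "X \<subseteq> Y \<Longrightarrow> mrank indep X \<le> mrank indep Y"
proof -
  assume "X \<subseteq> Y"
  obtain I where "I \<subseteq> X" "indep I" "card I = mrank indep X"
    by (rule obtain_indep_card_mrank)
  then show ?thesis
    using card_le_mrank[of I Y] \<open>X \<subseteq> Y\<close> by simp
qed

lemma exists_circuit_subset:
  assumes "Y \<subseteq> E" "\<not> indep Y"
  shows "\<exists>C. circuit E indep C \<and> C \<subseteq> Y"
proof -
  obtain C where C: "C \<subseteq> Y" "\<not> indep C"
    and minimal: "\<forall>D. D \<subseteq> Y \<and> \<not> indep D \<longrightarrow> card C \<le> card D"
    using ex_has_least_nat[of "\<lambda>D. D \<subseteq> Y \<and> \<not> indep D" Y card] assms(2) by auto
  have "finite C"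
    using C(1) assms(1) finite_subset_ground by blast
  have "indep D" if "D \<subset> C" for D
  proof (rule ccontr)
    assume "\<not> indep D"
    then have "card C \<le> card D" using minimal that C(1) by blast
    then show False using psubset_card_mono[OF \<open>finite C\<close> that] by simp
  qed
  then show ?thesis
    using C assms(1) unfolding circuit_def by blast
qed

lemma indep_if_k_free:
  assumes "k_free E indep k U" "Y \<subseteq> U" "Y \<subseteq> E" "int (card Y) \<le> k"
  shows "indep Y"
proof (rule ccontr)
  assume "\<not> indep Y"
  then obtain C where C: "circuit E indep C" "C \<subseteq> Y"
    using exists_circuit_subset assms(3) by blast
  have "card C \<le> card Y"
    using card_mono[OF finite_subset_ground[OF assms(3)] C(2)] .
  then show False
    using assms(1,2,4) C unfolding k_free_def by fastforce
qed

text \<open>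
  An element outside a flat \<open>F\<close> raises the rank; augmenting a maximal independent subset of
  \<open>F\<close> from a larger independent subset of \<open>F \<union> {e}\<close> can therefore only add \<open>e\<close>.
\<close>
lemma mem_flat_if_insert_dependent:
  assumes F: "flat E indep F" and Y: "Y \<subseteq> F" "indep Y" "card Y = mrank indep F"
    and e: "e \<in> E" "\<not> indep (insert e Y)"
  shows "e \<in> F"
proof (rule ccontr)
  assume "e \<notin> F"
  then have "mrank indep (insert e F) \<noteq> mrank indep F"
    using F e(1) unfolding flat_def mcl_def by auto
  then have "card Y < mrank indep (insert e F)"
    using mrank_mono[OF subset_insertI, of F e] Y(3) by linarith
  moreover obtain I where I: "I \<subseteq> insert e F" "indep I" "card I = mrank indep (insert e F)"
    by (rule obtain_indep_card_mrank)
  ultimately obtain f where f: "f \<in> I - Y" "indep (insert f Y)"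
    using indep_augment[OF Y(2) I(2)] by auto
  have "f \<in> F" using f e(2) I(1) by auto
  have "card (insert f Y) \<le> mrank indep F"
    using card_le_mrank[of "insert f Y" F] f(2) \<open>f \<in> F\<close> Y(1) by simp
  then show False
    using f(1) Y(3) finite_indep[OF Y(2)] by simp
qed

lemma hyperplane_subset_if_common_indep:
  assumes H: "hyperplane E indep H" and H': "hyperplane E indep H'"
    and Y: "Y \<subseteq> H" "Y \<subseteq> H'" "indep Y" "card Y + 1 = mrank indep E"
  shows "H \<subseteq> H'"
proof
  fix e assume "e \<in> H"
  show "e \<in> H'"
  proof (cases "e \<in> Y")
    case False
    have "\<not> indep (insert e Y)"
    proof
      assume "indep (insert e Y)"
      then have "card (insert e Y) \<le> mrank indep H"
        using card_le_mrank[of "insert e Y" H] \<open>e \<in> H\<close> Y(1) by simp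
      then show False
        using H False finite_indep[OF Y(3)] Y(4) unfolding hyperplane_def by simp
    qed
    moreover have "e \<in> E"
      using H \<open>e \<in> H\<close> unfolding hyperplane_def flat_def by blast
    ultimately show ?thesis
      using mem_flat_if_insert_dependent[OF _ Y(2,3)] H' Y(4) unfolding hyperplane_def by simp
  qed (use Y in blast)
qed

lemma hyperplane_eq_if_common_indep:
  assumes "hyperplane E indep H" "hyperplane E indep H'"
    and "Y \<subseteq> H" "Y \<subseteq> H'" "indep Y" "card Y + 1 = mrank indep E"
  shows "H = H'"
  using hyperplane_subset_if_common_indep[of H H' Y] hyperplane_subset_if_common_indep[of H' H Y] assms
  by blast

lemma basis_not_subset_hyperplane:
  assumes "hyperplane E indep H" "indep B" "card B = mrank indep E"
  shows "\<not> B \<subseteq> H"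
  using assms card_le_mrank[of B H] unfolding hyperplane_def by auto

end

section \<open>Paving matroids with prescribed dependent hyperplanes\<close>

locale paving_family =
  fixes E :: "'a set" and r :: nat and \<U> :: "'a set set"
  assumes finite_E: "finite E"
    and member_subset: "X \<in> \<U> \<Longrightarrow> X \<subseteq> E"
    and card_member: "X \<in> \<U> \<Longrightarrow> r \<le> card X"
    and member_eq_if_common:
      "X \<in> \<U> \<Longrightarrow> X' \<in> \<U> \<Longrightarrow> Y \<subseteq> X \<Longrightarrow> Y \<subseteq> X' \<Longrightarrow> card Y + 1 = r \<Longrightarrow> X = X'"
    and exists_free_set: "\<exists>B\<subseteq>E. card B = r \<and> (\<forall>X\<in>\<U>. \<not> B \<subseteq> X)"
begin

definition indep_paving :: "'a set \<Rightarrow> bool" where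
  "indep_paving X \<longleftrightarrow> X \<subseteq> E \<and> (card X < r \<or> card X = r \<and> (\<forall>U\<in>\<U>. \<not> X \<subseteq> U))"

lemma finite_subset_E: "X \<subseteq> E \<Longrightarrow> finite X"
  using finite_E finite_subset by metis

lemma card_le_if_indep_paving: "indep_paving X \<Longrightarrow> card X \<le> r"
  unfolding indep_paving_def by auto

text \<open>The family condition makes the member containing \<open>X \<union> {y}\<close> independent of \<open>y\<close>.\<close>
lemma exists_insert_not_in_member:
  assumes X: "X \<subseteq> E" "card X + 1 = r" and Y: "\<And>U. U \<in> \<U> \<Longrightarrow> \<not> Y \<subseteq> U"
    and "Y - X \<noteq> {}"
  shows "\<exists>y\<in>Y - X. \<forall>U\<in>\<U>. \<not> insert y X \<subseteq> U"
proof (rule ccontr)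
  assume "\<not> ?thesis"
  then have covered: "\<forall>y\<in>Y - X. \<exists>U\<in>\<U>. insert y X \<subseteq> U" by blast
  obtain y0 U0 where U0: "U0 \<in> \<U>" "insert y0 X \<subseteq> U0"
    using covered \<open>Y - X \<noteq> {}\<close> by blast
  have "Y \<subseteq> U0"
  proof
    fix y assume "y \<in> Y"
    show "y \<in> U0"
    proof (cases "y \<in> X")
      case False
      then obtain U where "U \<in> \<U>" "insert y X \<subseteq> U" using covered \<open>y \<in> Y\<close> by blast
      with U0 X(2) member_eq_if_common[of U U0 X] show ?thesis by blast
    qed (use U0 in blast)
  qed
  then show False using Y U0(1) by blast
qed

lemma indep_paving_subset:
  assumes "indep_paving X" "Y \<subseteq> X"
  shows "indep_paving Y"
proof -
  have XE: "X \<subseteq> E" using assms(1) unfolding indep_paving_def by blast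
  have "card Y \<le> card X" using assms(2) card_mono finite_subset_E[OF XE] by blast
  moreover have "card Y = card X \<Longrightarrow> Y = X"
    using assms(2) card_subset_eq finite_subset_E[OF XE] by blast
  ultimately show ?thesis
    using assms card_le_if_indep_paving[OF assms(1)] unfolding indep_paving_def by fastforce
qed

lemma indep_paving_augment:
  assumes X: "indep_paving X" and Y: "indep_paving Y" and "card X < card Y"
  shows "\<exists>e\<in>Y - X. indep_paving (insert e X)"
proof -
  have XE: "X \<subseteq> E" and YE: "Y \<subseteq> E" using X Y unfolding indep_paving_def by auto
  have "Y - X \<noteq> {}"
    using \<open>card X < card Y\<close> card_mono[OF finite_subset_E[OF XE]] by (metis Diff_eq_empty_iff not_le)
  have card_insert: "card (insert e X) = card X + 1" if "e \<in> Y - X" for e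
    using that finite_subset_E[OF XE] by simp
  show ?thesis
  proof (cases "card X + 1 < r")
    case True
    then show ?thesis
      using \<open>Y - X \<noteq> {}\<close> card_insert YE XE unfolding indep_paving_def by fastforce
  next
    case False
    then have "card X + 1 = r" "card Y = r"
      using \<open>card X < card Y\<close> card_le_if_indep_paving[OF Y] by linarith+
    then have "\<forall>U\<in>\<U>. \<not> Y \<subseteq> U" using Y unfolding indep_paving_def by auto
    then obtain y where "y \<in> Y - X" "\<forall>U\<in>\<U>. \<not> insert y X \<subseteq> U"
      using exists_insert_not_in_member[OF XE \<open>card X + 1 = r\<close> _ \<open>Y - X \<noteq> {}\<close>] by blast
    then show ?thesis
      using card_insert \<open>card X + 1 = r\<close> YE XE unfolding indep_paving_def by fastforce
  qed
qed

lemma matroid_indep_paving: "matroid E indep_paving"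
proof -
  obtain B where "B \<subseteq> E" "card B = r" "\<forall>X\<in>\<U>. \<not> B \<subseteq> X"
    using exists_free_set by blast
  then have "indep_paving B" unfolding indep_paving_def by blast
  then have "indep_paving {}" using indep_paving_subset by blast
  moreover have "indep_paving X \<Longrightarrow> X \<subseteq> E" for X
    unfolding indep_paving_def by blast
  ultimately show ?thesis
    unfolding matroid_def using finite_E indep_paving_subset indep_paving_augment by blast
qed

lemma mrank_indep_paving_E: "mrank indep_paving E = r"
proof (rule antisym)
  show "mrank indep_paving E \<le> r"
    using mrank_le[OF matroid_indep_paving] card_le_if_indep_paving by blast
  obtain B where "B \<subseteq> E" "card B = r" "indep_paving B"
    unfolding indep_paving_def using exists_free_set by blast
  then show "r \<le> mrank indep_paving E"
    using card_le_mrank[OF matroid_indep_paving] by metis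
qed

lemma paving_indep_paving: "paving E indep_paving"
  unfolding paving_def mrank_indep_paving_E circuit_def indep_paving_def by (auto simp: not_le)

lemma mrank_le_if_subset_member:
  assumes "U \<in> \<U>" "X \<subseteq> U"
  shows "mrank indep_paving X \<le> r - 1"
proof (rule mrank_le[OF matroid_indep_paving])
  fix I assume "I \<subseteq> X" "indep_paving I"
  then have "card I < r"
    using assms unfolding indep_paving_def by blast
  then show "card I \<le> r - 1" by linarith
qed

lemma mrank_ge_if_card_ge:
  assumes "X \<subseteq> E" "r \<le> card X + 1"
  shows "r - 1 \<le> mrank indep_paving X"
proof (cases "r = 0")
  case False
  obtain Z where "Z \<subseteq> X" "card Z = r - 1"
    using obtain_subset_with_card_n[of "r - 1" X] assms(2) by (metis le_diff_conv)
  moreover have "indep_paving Z"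
    using calculation assms(1) False unfolding indep_paving_def by auto
  ultimately show ?thesis
    using card_le_mrank[OF matroid_indep_paving, of Z X] by simp
qed simp

lemma mrank_ge_if_not_subset_member:
  assumes X: "X \<subseteq> E" "r \<le> card X" and not_in: "\<And>U. U \<in> \<U> \<Longrightarrow> \<not> X \<subseteq> U"
  shows "r \<le> mrank indep_paving X"
proof (cases "r = 0")
  case False
  obtain Z where Z: "Z \<subseteq> X" "card Z = r - 1"
    using obtain_subset_with_card_n[of "r - 1" X] X(2) by (metis diff_le_self order_trans)
  have "finite Z" using Z(1) X(1) finite_subset_E by blast
  have "Z \<noteq> X" using Z(2) X(2) False by auto
  then have "X - Z \<noteq> {}" using Z(1) by blast
  then obtain y where y: "y \<in> X - Z" "\<forall>U\<in>\<U>. \<not> insert y Z \<subseteq> U"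
    using exists_insert_not_in_member[of Z X] Z X(1) not_in False by auto
  have "card (insert y Z) = r"
    using y(1) Z(2) \<open>finite Z\<close> False by simp
  then have "indep_paving (insert y Z)"
    using y Z(1) X(1) unfolding indep_paving_def by auto
  moreover have "insert y Z \<subseteq> X" using y(1) Z(1) by blast
  ultimately show ?thesis
    using card_le_mrank[OF matroid_indep_paving, of "insert y Z" X] \<open>card (insert y Z) = r\<close> by simp
qed simp

lemma member_if_dependent_hyperplane:
  assumes H: "hyperplane E indep_paving X" and "\<not> indep_paving X"
  shows "X \<in> \<U>"
proof -
  have XE: "X \<subseteq> E" and rank_X: "mrank indep_paving X + 1 = r"
    and closed: "mcl E indep_paving X = X"
    using H mrank_indep_paving_E unfolding hyperplane_def flat_def by auto
  have "card X \<ge> r"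
    using assms(2) XE unfolding indep_paving_def by auto
  then obtain U where U: "U \<in> \<U>" "X \<subseteq> U"
    using mrank_ge_if_not_subset_member[OF XE] rank_X by fastforce
  have "U \<subseteq> mcl E indep_paving X"
  proof
    fix e assume "e \<in> U"
    then have "mrank indep_paving (insert e X) \<le> mrank indep_paving X"
      using mrank_le_if_subset_member[OF U(1), of "insert e X"] U(2) rank_X by simp
    then show "e \<in> mcl E indep_paving X"
      using mrank_mono[OF matroid_indep_paving subset_insertI, of X e] \<open>e \<in> U\<close>
        member_subset[OF U(1)] unfolding mcl_def by auto
  qed
  then show ?thesis using U closed by auto
qed

lemma one_le_r_if_member:
  assumes "U \<in> \<U>"
  shows "1 \<le> r"
proof (rule ccontr)
  assume "\<not> 1 \<le> r"
  obtain B where "B \<subseteq> E" "card B = r" "\<forall>X\<in>\<U>. \<not> B \<subseteq> X"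
    using exists_free_set by blast
  moreover have "finite B" using \<open>B \<subseteq> E\<close> finite_subset_E by blast
  moreover have "card B = 0" using \<open>card B = r\<close> \<open>\<not> 1 \<le> r\<close> by linarith
  ultimately have "B = {}" by simp
  then show False
    using \<open>\<forall>X\<in>\<U>. \<not> B \<subseteq> X\<close> assms by blast
qed

lemma mrank_member:
  assumes "U \<in> \<U>"
  shows "mrank indep_paving U = r - 1"
proof -
  have "r \<le> card U + 1" using card_member[OF assms] by simp
  then show ?thesis
    using mrank_le_if_subset_member[OF assms order_refl]
      mrank_ge_if_card_ge[OF member_subset[OF assms]] by linarith
qed

text \<open>Any \<open>(r-1)\<close>-subset of \<open>U\<close> pins down \<open>U\<close>, so \<open>U \<union> {e}\<close> lies in no member of \<open>\<U>\<close>.\<close>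
lemma mcl_member:
  assumes U: "U \<in> \<U>"
  shows "mcl E indep_paving U = U"
proof
  have UE: "U \<subseteq> E" and "1 \<le> r" and "r \<le> card U"
    using member_subset[OF U] one_le_r_if_member[OF U] card_member[OF U] .
  show "U \<subseteq> mcl E indep_paving U"
    using UE unfolding mcl_def by (auto simp: insert_absorb)
  show "mcl E indep_paving U \<subseteq> U"
  proof
    fix e assume e: "e \<in> mcl E indep_paving U"
    then have eE: "e \<in> E" and same_rank: "mrank indep_paving (insert e U) = r - 1"
      using mrank_member[OF U] unfolding mcl_def by auto
    show "e \<in> U"
    proof (rule ccontr)
      assume "e \<notin> U"
      obtain Y where Y: "Y \<subseteq> U" "card Y = r - 1"
        using obtain_subset_with_card_n[of "r - 1" U] \<open>r \<le> card U\<close> by (metis diff_le_self order_trans)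
      have not_in: "\<not> insert e U \<subseteq> U'" if "U' \<in> \<U>" for U'
      proof
        assume "insert e U \<subseteq> U'"
        then have "U = U'"
          using member_eq_if_common[OF U that, of Y] Y \<open>1 \<le> r\<close> by auto
        then show False using \<open>insert e U \<subseteq> U'\<close> \<open>e \<notin> U\<close> by blast
      qed
      have "r \<le> card (insert e U)"
        using \<open>r \<le> card U\<close> finite_subset_E[OF UE] card_insert_le[of U e] by linarith
      then have "r \<le> mrank indep_paving (insert e U)"
        using mrank_ge_if_not_subset_member[OF _ _ not_in] eE UE by simp
      then show False
        using same_rank \<open>1 \<le> r\<close> by linarith
    qed
  qed
qed

lemma dependent_hyperplane_if_member:
  assumes U: "U \<in> \<U>"
  shows "hyperplane E indep_paving U" "\<not> indep_paving U"
proof -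
  show "hyperplane E indep_paving U"
    using mcl_member[OF U] member_subset[OF U] mrank_member[OF U] one_le_r_if_member[OF U]
      mrank_indep_paving_E unfolding hyperplane_def flat_def by simp
  show "\<not> indep_paving U"
    using card_member[OF U] U unfolding indep_paving_def by auto
qed

lemma dependent_hyperplanes_indep_paving:
  "{X. hyperplane E indep_paving X \<and> \<not> indep_paving X} = \<U>"
  using member_if_dependent_hyperplane dependent_hyperplane_if_member by blast

end

lemma subset_cl_k: "X \<subseteq> cl_k E indep k X"
  unfolding cl_k_def by blast

lemma hyperplane_eq_if_free_subsets_meet:
  assumes "matroid E indep" "mrank indep E = r"
    and "hyperplane E indep H" "k_free E indep (int r - 1) X" "X \<subseteq> H"
    and "hyperplane E indep H'" "k_free E indep (int r - 1) X'" "X' \<subseteq> H'"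
    and "Y \<subseteq> X" "Y \<subseteq> X'" "card Y + 1 = r"
  shows "H = H'"
proof -
  have "Y \<subseteq> E"
    using assms(3,5,9) unfolding hyperplane_def flat_def by blast
  then have "indep Y"
    using indep_if_k_free[OF assms(1,4,9)] assms(11) by simp
  moreover have "Y \<subseteq> H" "Y \<subseteq> H'"
    using assms(5,8,9,10) by auto
  ultimately show ?thesis
    using hyperplane_eq_if_common_indep[OF assms(1,3,6)] assms(2,11) by simp
qed

lemma paving_family_free_hyperplane_subsets:
  assumes m: "matroid E indep" and rank: "mrank indep E = r"
    and free: "\<And>H. hyperplane E indep H \<Longrightarrow> k_free E indep (int r - 1) (U H) \<and> U H \<subseteq> H"
  shows "paving_family E r {U H | H. hyperplane E indep H \<and> r \<le> card (U H)}"
proof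
  let ?\<U> = "{U H | H. hyperplane E indep H \<and> r \<le> card (U H)}"
  show "finite E" using finite_ground[OF m] .
  show "X \<subseteq> E" "r \<le> card X" if X: "X \<in> ?\<U>" for X
  proof -
    obtain H where "X = U H" "hyperplane E indep H" "r \<le> card (U H)"
      using X by blast
    then show "X \<subseteq> E" "r \<le> card X"
      using free[of H] unfolding hyperplane_def flat_def by auto
  qed
  show "X = X'"
    if members: "X \<in> ?\<U>" "X' \<in> ?\<U>" and Y: "Y \<subseteq> X" "Y \<subseteq> X'" "card Y + 1 = r" for X X' Y
  proof -
    obtain H H' where H: "X = U H" "hyperplane E indep H" and H': "X' = U H'" "hyperplane E indep H'"
      using members by blast
    then have "H = H'"
      using hyperplane_eq_if_free_subsets_meet[OF m rank H(2) _ _ H'(2) _ _ _ _ Y(3)] free Y(1,2)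
      by blast
    then show ?thesis using H H' by simp
  qed
  obtain B where B: "B \<subseteq> E" "indep B" "card B = r"
    using obtain_indep_card_mrank[OF m, of E] rank by metis
  have "\<not> B \<subseteq> U H" if "hyperplane E indep H" for H
    using basis_not_subset_hyperplane[OF m that B(2)] B(3) rank free[OF that] by auto
  then show "\<exists>B\<subseteq>E. card B = r \<and> (\<forall>X\<in>?\<U>. \<not> B \<subseteq> X)"
    using B by blast
qed

theorem lemma4p3:
  fixes E :: "'a set" and indep :: "'a set \<Rightarrow> bool" and r :: nat
    and U :: "'a set \<Rightarrow> 'a set"
  assumes "matroid E indep"
    and "mrank indep E = r"
    and "\<forall>H. hyperplane E indep H \<longrightarrow>
            k_free E indep (int r - 1) (U H) \<and> cl_k E indep (int r - 2) (U H) = H"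
  shows "\<exists>indep'. matroid E indep' \<and> mrank indep' E = r \<and> paving E indep' \<and>
           {X. hyperplane E indep' X \<and> \<not> indep' X} =
           {U H | H. hyperplane E indep H \<and> card (U H) \<ge> r}"
proof -
  have "k_free E indep (int r - 1) (U H) \<and> U H \<subseteq> H" if "hyperplane E indep H" for H
    using assms(3) subset_cl_k[of "U H" E indep "int r - 2"] that by metis
  then interpret paving_family E r "{U H | H. hyperplane E indep H \<and> r \<le> card (U H)}"
    using paving_family_free_hyperplane_subsets[OF assms(1,2)] by blast
  show ?thesis
    using matroid_indep_paving mrank_indep_paving_E paving_indep_paving
      dependent_hyperplanes_indep_paving by blast
qed

end
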